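(* Let $\alpha,\beta$ be compositions with $\beta\subseteq\alpha$ such that $\alpha/\beta$ is reduced and $\beta$ is a partition (i.e. $\beta_1\ge\beta_2\ge\cdots$). Then $\mathrm{SET}(\alpha/\beta)$ has a unique minimal element, $S^{\mathrm{col}}_{\alpha/\beta}$. Equivalently, $\mathrm{SET}(\alpha/\beta)$ coincides with the interval $[S^{\mathrm{col}}_{\alpha/\beta},S^{\mathrm{row}}_{\alpha/\beta}]$ of $\mathrm{SIT}(\alpha/\beta)$, and its rank is $\binom{|\alpha/\beta|}{2}-\sum_{c\in\alpha/\beta}\mathrm{ls}(c)$.
   Context: A composition $\alpha=(\alpha_1,\ldots,\alpha_k)$ is a finite sequence of positive integers, $|\alpha|=\sum\alpha_i$. Its diagram has rows numbered from the bottom (row 1 lowest), row $i$ consisting of the cells in columns $1,\ldots,\alpha_i$. For $\beta\subseteq\alpha$ (i.e. $\ell(\beta)\le\ell(\alpha)$, $\beta_j\le\alpha_j$), the skew diagram $\alpha/\beta$ consists of the cells in row $i$, column $j$ with $\beta_i<j\le\alpha_i$ ($\beta_i=0$ for $i>\ell(\beta)$); $n=|\alpha/\beta|$. $\alpha/\beta$ is reduced if it has no empty row (no $i$ with $\alpha_i=\beta_i$). $\mathrm{SIT}(\alpha/\beta)$: bijective fillings of $\alpha/\beta$ with $1,\ldots,n$ with rows increasing left to right and column-1 entries increasing bottom to top. $\mathrm{SET}(\alpha/\beta)\subseteq\mathrm{SIT}(\alpha/\beta)$: fillings with all rows increasing left to right and all columns increasing bottom to top. For $1\le i\le n-1$,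 $\pi_i(T)=T$ if $i+1$ is in a strictly higher row than $i$, $\pi_i(T)=s_i(T)$ (swap $i$ and $i+1$) if $i+1$ is in a strictly lower row than $i$, and $\pi_i(T)=0$ otherwise. The poset order on $\mathrm{SIT}(\alpha/\beta)$: $T\le T'$ iff $T'$ is obtained from $T$ by a sequence of operators $\pi_i$ (all intermediate results nonzero); this poset is graded with rank function given by the number of inversions of the reading word, and $\mathrm{SET}(\alpha/\beta)$ has the induced order. $S^{\mathrm{row}}_{\alpha/\beta}$ is filled with $1,\ldots,n$ consecutively along rows left to right, from the bottom row upward; $S^{\mathrm{col}}_{\alpha/\beta}$ is filled consecutively along columns bottom to top, from the leftmost column rightward. For a cell $c$, $\mathrm{ls}(c)$ is the number of cells of $\alpha/\beta$ other than $c$ weakly southwest of $c$. *)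

theory Defs
  imports Main
begin

text \<open>Compositions are lists of positive naturals; row i (1-based, counted from the
bottom) of a composition alpha has length alpha!(i-1). Cells are pairs (row, column),
both 1-based.\<close>

definition is_composition :: "nat list \<Rightarrow> bool" where
  "is_composition a \<longleftrightarrow> (\<forall>x\<in>set a. 0 < x)"

definition is_partition :: "nat list \<Rightarrow> bool" where
  "is_partition b \<longleftrightarrow> sorted_wrt (\<ge>) b"

definition part :: "nat list \<Rightarrow> nat \<Rightarrow> nat" where
  "part b i = (if 1 \<le> i \<and> i \<le> length b then b ! (i - 1) else 0)"

definition comp_contained :: "nat list \<Rightarrow> nat list \<Rightarrow> bool" where
  "comp_contained b a \<longleftrightarrow> length b \<le> length a \<and> (\<forall>j. part b j \<le> part a j)"

definition skew_cells :: "nat list \<Rightarrow> nat list \<Rightarrow> (nat \<times> nat) set" where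
  "skew_cells a b = {(i, j). 1 \<le> i \<and> i \<le> length a \<and> part b i < j \<and> j \<le> part a i}"

definition reduced :: "nat list \<Rightarrow> nat list \<Rightarrow> bool" where
  "reduced a b \<longleftrightarrow> (\<forall>i. 1 \<le> i \<and> i \<le> length a \<longrightarrow> part a i \<noteq> part b i)"

type_synonym filling = "nat \<times> nat \<Rightarrow> nat"

definition bij_filling :: "(nat \<times> nat) set \<Rightarrow> filling \<Rightarrow> bool" where
  "bij_filling D T \<longleftrightarrow> bij_betw T D {1..card D} \<and> (\<forall>c. c \<notin> D \<longrightarrow> T c = 0)"

definition SIT :: "nat list \<Rightarrow> nat list \<Rightarrow> filling set" where
  "SIT a b = {T. bij_filling (skew_cells a b) T
     \<and> (\<forall>i j j'. (i, j) \<in> skew_cells a b \<and> (i, j') \<in> skew_cells a b \<and> j < j' \<longrightarrow> T (i, j) < T (i, j'))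
     \<and> (\<forall>i i'. (i, 1) \<in> skew_cells a b \<and> (i', 1) \<in> skew_cells a b \<and> i < i' \<longrightarrow> T (i, 1) < T (i', 1))}"

definition SET :: "nat list \<Rightarrow> nat list \<Rightarrow> filling set" where
  "SET a b = {T \<in> SIT a b.
     \<forall>i i' j. (i, j) \<in> skew_cells a b \<and> (i', j) \<in> skew_cells a b \<and> i < i' \<longrightarrow> T (i, j) < T (i', j)}"

definition row_of :: "(nat \<times> nat) set \<Rightarrow> filling \<Rightarrow> nat \<Rightarrow> nat" where
  "row_of D T v = fst (THE c. c \<in> D \<and> T c = v)"

definition swap_entries :: "nat \<Rightarrow> filling \<Rightarrow> filling" where
  "swap_entries k T = (\<lambda>c. if T c = k then k + 1 else if T c = k + 1 then k else T c)"

text \<open>The operator pi_k; None represents the result 0.\<close>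
definition pi_op :: "(nat \<times> nat) set \<Rightarrow> nat \<Rightarrow> filling \<Rightarrow> filling option" where
  "pi_op D k T =
     (if row_of D T k < row_of D T (k + 1) then Some T
      else if row_of D T (k + 1) < row_of D T k then Some (swap_entries k T)
      else None)"

definition pi_step :: "(nat \<times> nat) set \<Rightarrow> filling \<Rightarrow> filling \<Rightarrow> bool" where
  "pi_step D T T' \<longleftrightarrow> (\<exists>k. 1 \<le> k \<and> k + 1 \<le> card D \<and> pi_op D k T = Some T')"

definition tab_le :: "nat list \<Rightarrow> nat list \<Rightarrow> filling \<Rightarrow> filling \<Rightarrow> bool" where
  "tab_le a b T T' \<longleftrightarrow> T \<in> SIT a b \<and> T' \<in> SIT a b \<and> (pi_step (skew_cells a b))\<^sup>*\<^sup>* T T'"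

definition S_row :: "nat list \<Rightarrow> nat list \<Rightarrow> filling" where
  "S_row a b = (\<lambda>c. if c \<in> skew_cells a b then
      card {d \<in> skew_cells a b. fst d < fst c} + card {d \<in> skew_cells a b. fst d = fst c \<and> snd d \<le> snd c}
    else 0)"

definition S_col :: "nat list \<Rightarrow> nat list \<Rightarrow> filling" where
  "S_col a b = (\<lambda>c. if c \<in> skew_cells a b then
      card {d \<in> skew_cells a b. snd d < snd c} + card {d \<in> skew_cells a b. snd d = snd c \<and> fst d \<le> fst c}
    else 0)"

definition ls :: "nat list \<Rightarrow> nat list \<Rightarrow> nat \<times> nat \<Rightarrow> nat" where
  "ls a b c = card {d \<in> skew_cells a b. d \<noteq> c \<and> fst d \<le> fst c \<and> snd d \<le> snd c}"

text \<open>Number of inversions of the reading word (rows read left to right, from the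
top row downward); this is the rank function of SIT(a/b).\<close>
definition inv_count :: "nat list \<Rightarrow> nat list \<Rightarrow> filling \<Rightarrow> nat" where
  "inv_count a b T = card {(c, d). c \<in> skew_cells a b \<and> d \<in> skew_cells a b
      \<and> (fst c > fst d \<or> (fst c = fst d \<and> snd c < snd d)) \<and> T c > T d}"

end

theory Submission
  imports Defs "HOL-Library.Product_Lexorder" "HOL-Combinatorics.Transposition"
begin

(* Swapping the entries k and k+1 of a filling T changes the weight
   sum of T(c) * row(c) by the difference of the rows of k and k+1, so every
   nontrivial pi_k strictly increases it and the order on SIT is antisymmetric.
   If k+1 lies strictly below k in T in SIT, then pi_k T = s_k T lies above T; if there is
   no such k, rows weakly increase along 1, ..., n, which forces T = S_row.
   Dually, if k+1 lies strictly above k and in another column of T in SET, then s_k T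
   is again in SET and pi_k (s_k T) = T.  If there is no such k, columns weakly increase
   along 1, ..., n, because when beta is a partition every entry of a standard
   filling is smaller than the entries weakly above it and strictly to its right;
   this forces T = S_col.  Hence SET is the interval [S_col, S_row], and its rank
   is obtained by counting the inversions of S_row and of S_col. *)

section \<open>Bijective fillings and rank fillings\<close>

lemma bij_filling_in_range: "bij_filling D T \<Longrightarrow> c \<in> D \<Longrightarrow> T c \<in> {1..card D}"
  unfolding bij_filling_def bij_betw_def by auto

lemma bij_filling_eq_iff: "bij_filling D T \<Longrightarrow> c \<in> D \<Longrightarrow> d \<in> D \<Longrightarrow> T c = T d \<longleftrightarrow> c = d"
  unfolding bij_filling_def bij_betw_def inj_on_def by auto

lemma bij_filling_outside: "bij_filling D T \<Longrightarrow> c \<notin> D \<Longrightarrow> T c = 0"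
  unfolding bij_filling_def by blast

lemma bij_filling_surj: "bij_filling D T \<Longrightarrow> k \<in> {1..card D} \<Longrightarrow> \<exists>c\<in>D. T c = k"
  unfolding bij_filling_def bij_betw_def by (metis imageE)

lemma row_of_bij_filling: "bij_filling D T \<Longrightarrow> c \<in> D \<Longrightarrow> row_of D T (T c) = fst c"
  unfolding row_of_def by (rule arg_cong[where f = fst], rule the_equality) (auto simp: bij_filling_eq_iff)

lemma bij_filling_mono_if_Suc_mono:
  fixes g :: "nat \<times> nat \<Rightarrow> 'b::preorder"
  assumes T: "bij_filling D T"
    and Suc_mono: "\<And>c0 c1. c0 \<in> D \<Longrightarrow> c1 \<in> D \<Longrightarrow> T c1 = Suc (T c0) \<Longrightarrow> g c0 \<le> g c1"
    and c: "c \<in> D" and d: "d \<in> D" and le: "T c \<le> T d"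
  shows "g c \<le> g d"
proof -
  have "\<exists>e\<in>D. T e = T d \<and> g c \<le> g e"
    using le
  proof (induction rule: dec_induct)
    case base
    then show ?case using c by blast
  next
    case (step v)
    then obtain e where e: "e \<in> D" "T e = v" "g c \<le> g e" by blast
    have "Suc v \<in> {1..card D}" using step.hyps bij_filling_in_range[OF T d] by auto
    then obtain e' where e': "e' \<in> D" "T e' = Suc v" using bij_filling_surj[OF T] by blast
    have "g e \<le> g e'" using Suc_mono[OF e(1) e'(1)] e e' by simp
    then show ?case using e e' order_trans by blast
  qed
  then show ?thesis using bij_filling_eq_iff[OF T _ d] by auto
qed

definition rank :: "('a \<Rightarrow> 'b::linorder) \<Rightarrow> 'a set \<Rightarrow> 'a \<Rightarrow> nat" where
  "rank f D c = card {d \<in> D. f d \<le> f c}"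

definition rank_filling :: "(nat \<times> nat \<Rightarrow> 'b::linorder) \<Rightarrow> (nat \<times> nat) set \<Rightarrow> filling" where
  "rank_filling f D c = (if c \<in> D then rank f D c else 0)"

lemma rank_less_rank_iff:
  assumes "finite D" "d \<in> D"
  shows "rank f D c < rank f D d \<longleftrightarrow> f c < f d"
proof
  assume less: "f c < f d"
  then have "{e \<in> D. f e \<le> f c} \<subseteq> {e \<in> D. f e \<le> f d}" by auto
  moreover have "d \<notin> {e \<in> D. f e \<le> f c}" using less by auto
  ultimately have "{e \<in> D. f e \<le> f c} \<subset> {e \<in> D. f e \<le> f d}" using assms(2) by blast
  then show "rank f D c < rank f D d" unfolding rank_def using assms(1) by (simp add: psubset_card_mono)
next
  assume "rank f D c < rank f D d"
  moreover have "f d \<le> f c \<Longrightarrow> rank f D d \<le> rank f D c"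
    unfolding rank_def using assms(1) by (intro card_mono) auto
  ultimately show "f c < f d" by (meson leD leI)
qed

lemma bij_betw_rank:
  assumes fin: "finite D" and inj: "inj_on f D"
  shows "bij_betw (rank f D) D {1..card D}"
proof -
  have inj_rank: "inj_on (rank f D) D"
  proof (rule inj_onI, rule ccontr)
    fix c d assume cd: "c \<in> D" "d \<in> D" "rank f D c = rank f D d" "c \<noteq> d"
    then have "f c \<noteq> f d" using inj by (auto simp: inj_on_eq_iff)
    then show False using cd rank_less_rank_iff[OF fin] by (metis less_irrefl linorder_neqE)
  qed
  have "rank f D ` D \<subseteq> {1..card D}"
  proof
    fix v assume "v \<in> rank f D ` D"
    then obtain c where c: "c \<in> D" "v = rank f D c" by auto
    have "0 < rank f D c" unfolding rank_def using c fin by (auto simp: card_gt_0_iff)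
    moreover have "rank f D c \<le> card D" unfolding rank_def using fin by (intro card_mono) auto
    ultimately show "v \<in> {1..card D}" using c by simp
  qed
  moreover have "card (rank f D ` D) = card {1..card D}" using card_image[OF inj_rank] by simp
  ultimately show ?thesis using inj_rank by (simp add: bij_betw_def card_subset_eq)
qed

lemma bij_filling_rank_filling: "finite D \<Longrightarrow> inj_on f D \<Longrightarrow> bij_filling D (rank_filling f D)"
  unfolding bij_filling_def
proof
  assume "finite D" "inj_on f D"
  then have "bij_betw (rank f D) D {1..card D}" by (rule bij_betw_rank)
  then show "bij_betw (rank_filling f D) D {1..card D}"
    by (rule bij_betw_cong[THEN iffD1, rotated]) (simp add: rank_filling_def)
qed (simp add: rank_filling_def)

lemma rank_filling_less_iff:
  "finite D \<Longrightarrow> d \<in> D \<Longrightarrow> c \<in> D \<Longrightarrow> rank_filling f D c < rank_filling f D d \<longleftrightarrow> f c < f d"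
  by (simp add: rank_filling_def rank_less_rank_iff)

lemma eq_rank_filling:
  assumes fin: "finite D" and inj: "inj_on f D" and T: "bij_filling D T"
    and mono: "monotone_on D (\<lambda>c d. f c < f d) (<) T"
  shows "T = rank_filling f D"
proof
  fix c
  show "T c = rank_filling f D c"
  proof (cases "c \<in> D")
    case c: True
    have "f d \<le> f c \<longleftrightarrow> T d \<le> T c" if d: "d \<in> D" for d
    proof
      assume "f d \<le> f c"
      then consider "f d < f c" | "d = c" using inj c d by (auto simp: inj_on_eq_iff order.order_iff_strict)
      then show "T d \<le> T c" using monotone_onD[OF mono d c] by cases auto
    next
      assume "T d \<le> T c"
      then show "f d \<le> f c" using monotone_onD[OF mono c d] by (auto simp: not_less[symmetric])
    qed
    then have "{d \<in> D. f d \<le> f c} = {d \<in> D. T d \<le> T c}" by blast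
    also have "T ` \<dots> = {1..T c}"
    proof
      show "{1..T c} \<subseteq> T ` {d \<in> D. T d \<le> T c}"
        using bij_filling_surj[OF T] bij_filling_in_range[OF T c] by (force simp: image_iff)
    qed (use bij_filling_in_range[OF T] in auto)
    moreover have "inj_on T {d \<in> D. T d \<le> T c}"
      by (rule inj_onI) (simp add: bij_filling_eq_iff[OF T])
    ultimately have "rank f D c = T c" unfolding rank_def by (metis card_atLeastAtMost card_image diff_Suc_1)
    then show ?thesis using c by (simp add: rank_filling_def)
  qed (simp add: bij_filling_outside[OF T] rank_filling_def)
qed

lemma monotone_on_rank_filling:
  assumes "finite D" and "\<And>c d. P c d \<Longrightarrow> f c < f d"
  shows "monotone_on D P (<) (rank_filling f D)"
  using assms by (auto intro!: monotone_onI simp: rank_filling_less_iff)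

lemma rank_lex:
  fixes g :: "'a \<Rightarrow> 'b::linorder" and h :: "'a \<Rightarrow> 'c::linorder"
  assumes "finite D"
  shows "rank (\<lambda>d. (g d, h d)) D c
    = card {d \<in> D. g d < g c} + card {d \<in> D. g d = g c \<and> h d \<le> h c}"
proof -
  have "rank (\<lambda>d. (g d, h d)) D c
      = card ({d \<in> D. g d < g c} \<union> {d \<in> D. g d = g c \<and> h d \<le> h c})"
    unfolding rank_def by (rule arg_cong[where f = card]) (auto simp: less_eq_prod_def)
  also have "\<dots> = card {d \<in> D. g d < g c} + card {d \<in> D. g d = g c \<and> h d \<le> h c}"
    using assms by (intro card_Un_disjoint) auto
  finally show ?thesis .
qed

lemma sum_pred_eq_choose_two: "(\<Sum>v=1..n. v - 1) = n choose 2"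
  by (induction n) (simp_all add: numeral_2_eq_2)

lemma card_pairs_less:
  fixes f :: "'a \<Rightarrow> 'b::linorder"
  assumes fin: "finite D" and inj: "inj_on f D"
  shows "card {(c, d). c \<in> D \<and> d \<in> D \<and> f d < f c} = card D choose 2"
proof -
  have "{(c, d). c \<in> D \<and> d \<in> D \<and> f d < f c} = (SIGMA c:D. {d \<in> D. f d < f c})" by auto
  then have "card {(c, d). c \<in> D \<and> d \<in> D \<and> f d < f c} = (\<Sum>c\<in>D. card {d \<in> D. f d < f c})"
    using fin by simp
  also have "\<dots> = (\<Sum>c\<in>D. rank f D c - 1)"
  proof (rule sum.cong)
    fix c assume c: "c \<in> D"
    have "{d \<in> D. f d \<le> f c} = insert c {d \<in> D. f d < f c}"
      using c inj by (auto simp: inj_on_eq_iff le_less)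
    then show "card {d \<in> D. f d < f c} = rank f D c - 1" unfolding rank_def using fin by simp
  qed simp
  also have "\<dots> = (\<Sum>v=1..card D. v - 1)"
    using sum.reindex_bij_betw[OF bij_betw_rank[OF fin inj], of "\<lambda>v. v - 1"] .
  also have "\<dots> = card D choose 2"
    using sum_pred_eq_choose_two .
  finally show ?thesis .
qed

section \<open>Swapping consecutive entries\<close>

lemma swap_entries_eq_transpose: "swap_entries k T = transpose k (Suc k) \<circ> T"
  by (auto simp: swap_entries_def transpose_def fun_eq_iff)

lemma swap_entries_swap_entries [simp]: "swap_entries k (swap_entries k T) = T"
  by (auto simp: swap_entries_def fun_eq_iff)

lemma bij_filling_swap_entries:
  assumes T: "bij_filling D T" and k: "1 \<le> k" "Suc k \<le> card D"
  shows "bij_filling D (swap_entries k T)"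
  unfolding bij_filling_def swap_entries_eq_transpose
proof
  show "bij_betw (transpose k (Suc k) \<circ> T) D {1..card D}"
    using T k unfolding bij_filling_def by (intro bij_betw_trans[OF _ bij_betw_transpose_iff]) auto
  show "\<forall>c. c \<notin> D \<longrightarrow> (transpose k (Suc k) \<circ> T) c = 0"
    using k by (simp add: bij_filling_outside[OF T])
qed

lemma transpose_Suc_less:
  "u < v \<Longrightarrow> (u, v) \<noteq> (k, Suc k) \<Longrightarrow> transpose k (Suc k) u < transpose k (Suc k) v"
  by (auto simp: transpose_def)

lemma monotone_on_swap_entries:
  assumes T: "bij_filling D T" and c0: "c0 \<in> D" and c1: "c1 \<in> D" and Suc: "T c1 = Suc (T c0)"
    and mono: "monotone_on D P (<) T" and not_P: "\<not> P c0 c1"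
  shows "monotone_on D P (<) (swap_entries (T c0) T)"
proof (rule monotone_onI)
  fix x y assume xy: "x \<in> D" "y \<in> D" "P x y"
  have "(T x, T y) \<noteq> (T c0, T c1)"
    using xy not_P c0 c1 by (auto simp: bij_filling_eq_iff[OF T])
  then show "swap_entries (T c0) T x < swap_entries (T c0) T y"
    using monotone_onD[OF mono xy] Suc by (simp add: swap_entries_eq_transpose transpose_Suc_less)
qed

lemma swap_entries_apply:
  assumes T: "bij_filling D T" and c0: "c0 \<in> D" and c1: "c1 \<in> D" and Suc: "T c1 = Suc (T c0)"
    and c: "c \<in> D"
  shows "swap_entries (T c0) T c = (if c = c0 then T c1 else if c = c1 then T c0 else T c)"
proof -
  have "T c = T c0 \<longleftrightarrow> c = c0" "T c = Suc (T c0) \<longleftrightarrow> c = c1"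
    using bij_filling_eq_iff[OF T c c0] bij_filling_eq_iff[OF T c c1] Suc by auto
  then show ?thesis using Suc by (simp add: swap_entries_def)
qed

definition row_weight :: "(nat \<times> nat) set \<Rightarrow> filling \<Rightarrow> nat" where
  "row_weight D T = (\<Sum>c\<in>D. T c * fst c)"

lemma row_weight_swap_entries:
  assumes fin: "finite D" and T: "bij_filling D T" and c0: "c0 \<in> D" and c1: "c1 \<in> D"
    and Suc: "T c1 = Suc (T c0)"
  shows "row_weight D (swap_entries (T c0) T) + fst c1 = row_weight D T + fst c0"
proof -
  have "swap_entries (T c0) T c * fst c + (if c = c1 then fst c else 0)
      = T c * fst c + (if c = c0 then fst c else 0)" if "c \<in> D" for c
    using swap_entries_apply[OF T c0 c1 Suc that] Suc by auto
  then have "(\<Sum>c\<in>D. swap_entries (T c0) T c * fst c + (if c = c1 then fst c else 0))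
      = (\<Sum>c\<in>D. T c * fst c + (if c = c0 then fst c else 0))"
    by (rule sum.cong[OF refl])
  then show ?thesis using fin c0 c1 by (simp add: row_weight_def sum.distrib)
qed

lemma row_weight_le: "bij_filling D T \<Longrightarrow> row_weight D T \<le> card D * (\<Sum>c\<in>D. fst c)"
  unfolding row_weight_def sum_distrib_left by (rule sum_mono) (use bij_filling_in_range in auto)

lemma pi_op_eq:
  assumes T: "bij_filling D T" and c0: "c0 \<in> D" and c1: "c1 \<in> D" and Suc: "T c1 = Suc (T c0)"
  shows "pi_op D (T c0) T = (if fst c0 < fst c1 then Some T
    else if fst c1 < fst c0 then Some (swap_entries (T c0) T) else None)"
  using row_of_bij_filling[OF T c0] row_of_bij_filling[OF T c1] Suc by (simp add: pi_op_def)

lemma pi_step_swap_entries: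
  assumes T: "bij_filling D T" and c0: "c0 \<in> D" and c1: "c1 \<in> D" and Suc: "T c1 = Suc (T c0)"
    and lower: "fst c1 < fst c0"
  shows "pi_step D T (swap_entries (T c0) T)"
  unfolding pi_step_def
  using pi_op_eq[OF assms(1-4)] lower bij_filling_in_range[OF T c0] bij_filling_in_range[OF T c1] Suc
  by (intro exI[of _ "T c0"]) auto

lemma pi_step_cases:
  assumes T: "bij_filling D T" and step: "pi_step D T T'"
  obtains (id) "T' = T"
  | (swap) c0 c1 where "c0 \<in> D" "c1 \<in> D" "T c1 = Suc (T c0)" "fst c1 < fst c0"
      "T' = swap_entries (T c0) T"
proof -
  obtain k where k: "1 \<le> k" "k + 1 \<le> card D" "pi_op D k T = Some T'"
    using step by (auto simp: pi_step_def)
  obtain c0 where c0: "c0 \<in> D" "T c0 = k" using bij_filling_surj[OF T, of k] k by auto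
  obtain c1 where c1: "c1 \<in> D" "T c1 = Suc k" using bij_filling_surj[OF T, of "Suc k"] k by auto
  show thesis
    using pi_op_eq[OF T c0(1) c1(1)] c0 c1 k(3) that by (auto split: if_splits)
qed

lemma pi_step_row_weight_less:
  assumes "finite D" "bij_filling D T" "pi_step D T T'" "T' \<noteq> T"
  shows "row_weight D T < row_weight D T'"
  using assms(2,3)
proof (cases rule: pi_step_cases)
  case (swap c0 c1)
  then show ?thesis using row_weight_swap_entries[OF assms(1,2) swap(1-3)] by simp
qed (use assms(4) in simp)

section \<open>Standard fillings of a skew shape\<close>

lemma finite_skew_cells: "finite (skew_cells a b)"
proof -
  have "skew_cells a b \<subseteq> {..length a} \<times> {..sum_list a}"
  proof
    fix c assume "c \<in> skew_cells a b"
    then obtain i j where c: "c = (i, j)" "1 \<le> i" "i \<le> length a" "j \<le> part a i"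
      by (auto simp: skew_cells_def)
    have "part a i \<le> sum_list a" using c elem_le_sum_list[of "i - 1" a] by (auto simp: part_def)
    then show "c \<in> {..length a} \<times> {..sum_list a}" using c by auto
  qed
  then show ?thesis by (rule finite_subset) auto
qed

lemma finite_pairs_skew_cells:
  "finite {(c, d). c \<in> skew_cells a b \<and> d \<in> skew_cells a b \<and> P c d}"
  by (rule finite_subset[OF _ finite_cartesian_product[OF finite_skew_cells finite_skew_cells]]) auto

definition left_of :: "nat \<times> nat \<Rightarrow> nat \<times> nat \<Rightarrow> bool" where
  "left_of c d \<longleftrightarrow> fst c = fst d \<and> snd c < snd d"

definition below :: "nat \<times> nat \<Rightarrow> nat \<times> nat \<Rightarrow> bool" where
  "below c d \<longleftrightarrow> snd c = snd d \<and> fst c < fst d"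

lemma SIT_iff: "T \<in> SIT a b \<longleftrightarrow> bij_filling (skew_cells a b) T
    \<and> monotone_on (skew_cells a b) left_of (<) T
    \<and> monotone_on (skew_cells a b) (\<lambda>c d. below c d \<and> snd c = 1) (<) T"
  unfolding SIT_def monotone_on_def left_of_def below_def by fastforce

lemma SET_iff: "T \<in> SET a b \<longleftrightarrow> T \<in> SIT a b \<and> monotone_on (skew_cells a b) below (<) T"
  unfolding SET_def monotone_on_def below_def by fastforce

lemma swap_entries_SIT:
  assumes T: "T \<in> SIT a b" and c0: "c0 \<in> skew_cells a b" and c1: "c1 \<in> skew_cells a b"
    and Suc: "T c1 = Suc (T c0)" and "\<not> left_of c0 c1" "\<not> below c0 c1"
  shows "swap_entries (T c0) T \<in> SIT a b"
proof -
  have bij: "bij_filling (skew_cells a b) T" using T by (simp add: SIT_iff)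
  have "1 \<le> T c0" "Suc (T c0) \<le> card (skew_cells a b)"
    using bij_filling_in_range[OF bij c0] bij_filling_in_range[OF bij c1] Suc by auto
  then show ?thesis
    using T assms(5,6) unfolding SIT_iff
    by (simp add: bij_filling_swap_entries monotone_on_swap_entries[OF bij c0 c1 Suc])
qed

lemma swap_entries_SET:
  assumes T: "T \<in> SET a b" and c0: "c0 \<in> skew_cells a b" and c1: "c1 \<in> skew_cells a b"
    and Suc: "T c1 = Suc (T c0)" and "\<not> left_of c0 c1" "\<not> below c0 c1"
  shows "swap_entries (T c0) T \<in> SET a b"
proof -
  have bij: "bij_filling (skew_cells a b) T" using T by (simp add: SET_iff SIT_iff)
  show ?thesis
    using T swap_entries_SIT[OF _ c0 c1 Suc assms(5,6)] assms(6) unfolding SET_iff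
    by (simp add: monotone_on_swap_entries[OF bij c0 c1 Suc])
qed

lemma pi_step_SIT:
  assumes T: "T \<in> SIT a b" and step: "pi_step (skew_cells a b) T T'"
  shows "T' \<in> SIT a b"
  using T[unfolded SIT_iff, THEN conjunct1] step
proof (cases rule: pi_step_cases)
  case (swap c0 c1)
  then show ?thesis using swap_entries_SIT[OF T] by (simp add: left_of_def below_def)
qed (use T in \<open>simp_all add: SIT_iff\<close>)

lemma pi_step_SET:
  assumes T: "T \<in> SET a b" and step: "pi_step (skew_cells a b) T T'"
  shows "T' \<in> SET a b"
  using T[unfolded SET_iff SIT_iff, THEN conjunct1, THEN conjunct1] step
proof (cases rule: pi_step_cases)
  case (swap c0 c1)
  then show ?thesis using swap_entries_SET[OF T] by (simp add: left_of_def below_def)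
qed (use T in \<open>simp_all add: SET_iff SIT_iff\<close>)

lemma tab_le_SET:
  assumes "tab_le a b T T'" and "T \<in> SET a b"
  shows "T' \<in> SET a b"
proof -
  have "(pi_step (skew_cells a b))\<^sup>*\<^sup>* T T'" using assms(1) by (simp add: tab_le_def)
  then show ?thesis by (induction rule: rtranclp_induct) (auto intro: pi_step_SET assms(2))
qed

lemma tab_le_row_weight_less:
  assumes "tab_le a b T T'" and "T' \<noteq> T"
  shows "row_weight (skew_cells a b) T < row_weight (skew_cells a b) T'"
proof -
  have "(pi_step (skew_cells a b))\<^sup>*\<^sup>* T T'" and T: "T \<in> SIT a b"
    using assms(1) by (simp_all add: tab_le_def)
  then have "T' \<in> SIT a b \<and> (T' = T \<or> row_weight (skew_cells a b) T < row_weight (skew_cells a b) T')"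
  proof (induction rule: rtranclp_induct)
    case (step T1 T2)
    then have "T2 = T1 \<or> row_weight (skew_cells a b) T1 < row_weight (skew_cells a b) T2"
      using pi_step_row_weight_less[OF finite_skew_cells] by (auto simp: SIT_iff)
    then show ?case using step pi_step_SIT by auto
  qed simp
  then show ?thesis using assms(2) by simp
qed

lemma tab_le_antisym: "tab_le a b T T' \<Longrightarrow> tab_le a b T' T \<Longrightarrow> T = T'"
  using tab_le_row_weight_less less_asym by metis

lemma S_row_eq_rank_filling: "S_row a b = rank_filling (\<lambda>c. c) (skew_cells a b)"
  using rank_lex[OF finite_skew_cells, of fst snd]
  by (simp add: S_row_def rank_filling_def fun_eq_iff)

lemma S_col_eq_rank_filling: "S_col a b = rank_filling (\<lambda>c. (snd c, fst c)) (skew_cells a b)"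
  using rank_lex[OF finite_skew_cells, of snd fst]
  by (simp add: S_col_def rank_filling_def fun_eq_iff)

lemma S_col_SET: "S_col a b \<in> SET a b"
  unfolding SET_iff SIT_iff S_col_eq_rank_filling
  by (intro conjI bij_filling_rank_filling monotone_on_rank_filling finite_skew_cells)
    (auto simp: left_of_def below_def less_prod_def' inj_on_def)

section \<open>The extremal fillings S_col and S_row\<close>

lemma part_antimono:
  assumes "is_partition b" "1 \<le> i" "i \<le> j"
  shows "part b j \<le> part b i"
proof (cases "i < j \<and> j \<le> length b")
  case True
  then have "b ! (j - 1) \<le> b ! (i - 1)"
    using assms sorted_wrt_nth_less[of "(\<ge>)" b "i - 1" "j - 1"] by (auto simp: is_partition_def)
  then show ?thesis using True assms by (simp add: part_def)
qed (use assms in \<open>auto simp: part_def\<close>)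

lemma SET_less_northeast:
  assumes b: "is_partition b" and T: "T \<in> SET a b"
    and c: "c \<in> skew_cells a b" and d: "d \<in> skew_cells a b"
    and "fst c \<le> fst d" and "snd c < snd d"
  shows "T c < T d"
proof -
  let ?e = "(fst d, snd c)"
  \<comment> \<open>since b is a partition, the cell in the row of d and the column of c lies in the shape\<close>
  have "1 \<le> fst c" using c by (cases c) (simp add: skew_cells_def)
  then have "part b (fst d) \<le> part b (fst c)" using part_antimono[OF b] \<open>fst c \<le> fst d\<close> by blast
  then have e: "?e \<in> skew_cells a b"
    using c d \<open>snd c < snd d\<close> by (auto simp: skew_cells_def)
  have "T c \<le> T ?e"
  proof (cases "fst c = fst d")
    case True
    then show ?thesis by (metis order.refl prod.collapse)
  next
    case False
    then show ?thesis using T[unfolded SET_iff] c e \<open>fst c \<le> fst d\<close>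
      by (auto simp: below_def monotone_on_def order.strict_implies_order)
  qed
  also have "T ?e < T d"
    using T[unfolded SET_iff SIT_iff] e d \<open>snd c < snd d\<close> by (auto simp: left_of_def monotone_on_def)
  finally show ?thesis .
qed

lemma SIT_eq_S_row:
  assumes T: "T \<in> SIT a b"
    and no_descent: "\<And>c0 c1. c0 \<in> skew_cells a b \<Longrightarrow> c1 \<in> skew_cells a b \<Longrightarrow>
      T c1 = Suc (T c0) \<Longrightarrow> fst c0 \<le> fst c1"
  shows "T = S_row a b"
proof -
  have bij: "bij_filling (skew_cells a b) T" using T by (simp add: SIT_iff)
  have "monotone_on (skew_cells a b) (<) (<) T"
  proof (rule monotone_onI)
    fix c d assume cd: "c \<in> skew_cells a b" "d \<in> skew_cells a b" "c < d"
    show "T c < T d"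
    proof (cases "fst c < fst d")
      case True
      then show ?thesis
        using bij_filling_mono_if_Suc_mono[where g = fst, OF bij no_descent cd(2,1)] by (meson leD leI)
    next
      case False
      then have "left_of c d" using cd(3) by (auto simp: left_of_def less_prod_def')
      then show ?thesis using T cd by (auto simp: SIT_iff monotone_on_def)
    qed
  qed
  then show ?thesis
    using eq_rank_filling[OF finite_skew_cells _ bij, of "\<lambda>c. c"] by (simp add: S_row_eq_rank_filling)
qed

lemma SET_eq_S_col:
  assumes b: "is_partition b" and T: "T \<in> SET a b"
    and no_ascent: "\<And>c0 c1. c0 \<in> skew_cells a b \<Longrightarrow> c1 \<in> skew_cells a b \<Longrightarrow>
      T c1 = Suc (T c0) \<Longrightarrow> fst c0 < fst c1 \<Longrightarrow> snd c0 = snd c1"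
  shows "T = S_col a b"
proof -
  have bij: "bij_filling (skew_cells a b) T" using T by (simp add: SET_iff SIT_iff)
  have col_step: "snd c0 \<le> snd c1"
    if "c0 \<in> skew_cells a b" "c1 \<in> skew_cells a b" "T c1 = Suc (T c0)" for c0 c1
    using no_ascent[OF that] SET_less_northeast[OF b T that(2,1)] that(3) by fastforce
  have "monotone_on (skew_cells a b) (\<lambda>c d. (snd c, fst c) < (snd d, fst d)) (<) T"
  proof (rule monotone_onI)
    fix c d assume cd: "c \<in> skew_cells a b" "d \<in> skew_cells a b" "(snd c, fst c) < (snd d, fst d)"
    show "T c < T d"
    proof (cases "snd c < snd d")
      case True
      then show ?thesis
        using bij_filling_mono_if_Suc_mono[where g = snd, OF bij col_step cd(2,1)] by (meson leD leI)
    next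
      case False
      then have "below c d" using cd(3) by (auto simp: below_def)
      then show ?thesis using T cd by (auto simp: SET_iff monotone_on_def)
    qed
  qed
  then show ?thesis
    unfolding S_col_eq_rank_filling
    by (rule eq_rank_filling[OF finite_skew_cells _ bij, rotated]) (auto simp: inj_on_def)
qed

lemma SIT_le_S_row:
  "T \<in> SIT a b \<Longrightarrow> tab_le a b T (S_row a b)"
proof (induction "card (skew_cells a b) * (\<Sum>c\<in>skew_cells a b. fst c) - row_weight (skew_cells a b) T"
    arbitrary: T rule: less_induct)
  case less
  let ?D = "skew_cells a b"
  have bij: "bij_filling ?D T" using less.prems by (simp add: SIT_iff)
  show ?case
  proof (cases "\<exists>c0\<in>?D. \<exists>c1\<in>?D. T c1 = Suc (T c0) \<and> fst c1 < fst c0")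
    case True
    then obtain c0 c1 where c: "c0 \<in> ?D" "c1 \<in> ?D" "T c1 = Suc (T c0)" "fst c1 < fst c0" by blast
    define T' where "T' = swap_entries (T c0) T"
    have step: "pi_step ?D T T'" unfolding T'_def by (rule pi_step_swap_entries[OF bij c])
    have T': "T' \<in> SIT a b" by (rule pi_step_SIT[OF less.prems step])
    have "T' \<noteq> T" using swap_entries_apply[OF bij c(1-3) c(1)] c(3) by (auto simp: T'_def)
    then have "row_weight ?D T < row_weight ?D T'"
      by (rule pi_step_row_weight_less[OF finite_skew_cells bij step])
    moreover have "row_weight ?D T' \<le> card ?D * (\<Sum>c\<in>?D. fst c)"
      using T' by (simp add: row_weight_le SIT_iff)
    ultimately have "tab_le a b T' (S_row a b)" using less.hyps T' by simp
    then show ?thesis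
      using step less.prems by (auto simp: tab_le_def intro: converse_rtranclp_into_rtranclp)
  next
    case False
    then have "T = S_row a b" using SIT_eq_S_row[OF less.prems] by (meson leI)
    then show ?thesis using less.prems by (simp add: tab_le_def)
  qed
qed

lemma S_col_le_SET:
  assumes b: "is_partition b"
  shows "T \<in> SET a b \<Longrightarrow> tab_le a b (S_col a b) T"
proof (induction "row_weight (skew_cells a b) T" arbitrary: T rule: less_induct)
  case less
  let ?D = "skew_cells a b"
  have bij: "bij_filling ?D T" using less.prems by (simp add: SET_iff SIT_iff)
  show ?case
  proof (cases "\<exists>c0\<in>?D. \<exists>c1\<in>?D. T c1 = Suc (T c0) \<and> fst c0 < fst c1 \<and> snd c0 \<noteq> snd c1")
    case True
    then obtain c0 c1 where c: "c0 \<in> ?D" "c1 \<in> ?D" "T c1 = Suc (T c0)"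
      and higher: "fst c0 < fst c1" and "snd c0 \<noteq> snd c1" by blast
    define T' where "T' = swap_entries (T c0) T"
    have T': "T' \<in> SET a b"
      unfolding T'_def using swap_entries_SET[OF less.prems c] higher \<open>snd c0 \<noteq> snd c1\<close>
      by (simp add: left_of_def below_def)
    have swapped: "T' c0 = T c1" "T' c1 = T c0"
      using swap_entries_apply[OF bij c] c(1,2,3) by (auto simp: T'_def)
    have bij': "bij_filling ?D T'" using T' by (simp add: SET_iff SIT_iff)
    have step: "pi_step ?D T' T"
      using pi_step_swap_entries[OF bij' c(2,1)] swapped c(3) higher by (simp add: T'_def)
    have "T' \<noteq> T" using swapped c(3) by auto
    then have "row_weight ?D T' < row_weight ?D T"
      using pi_step_row_weight_less[OF finite_skew_cells bij' step] by simp
    then have "tab_le a b (S_col a b) T'" using less.hyps T' by simp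
    then show ?thesis
      using step less.prems by (auto simp: tab_le_def SET_iff intro: rtranclp.rtrancl_into_rtrancl)
  next
    case False
    then have "T = S_col a b" using SET_eq_S_col[OF b less.prems] by blast
    then show ?thesis using less.prems by (simp add: tab_le_def SET_iff)
  qed
qed

lemma inv_count_S_row:
  "inv_count a b (S_row a b)
    = card {(c, d). c \<in> skew_cells a b \<and> d \<in> skew_cells a b \<and> fst d < fst c}"
  unfolding inv_count_def S_row_eq_rank_filling
  by (rule arg_cong[where f = card]) (auto simp: rank_filling_less_iff[OF finite_skew_cells])

lemma inv_count_S_col:
  "inv_count a b (S_col a b)
    = card {(c, d). c \<in> skew_cells a b \<and> d \<in> skew_cells a b \<and> fst d < fst c \<and> snd d \<le> snd c}"
  unfolding inv_count_def S_col_eq_rank_filling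
  by (rule arg_cong[where f = card]) (auto simp: rank_filling_less_iff[OF finite_skew_cells])

lemma sum_ls:
  "(\<Sum>c\<in>skew_cells a b. ls a b c)
    = card {(c, d). c \<in> skew_cells a b \<and> d \<in> skew_cells a b \<and> fst d < fst c \<and> snd d \<le> snd c}
    + card {(c, d). c \<in> skew_cells a b \<and> d \<in> skew_cells a b \<and> fst d = fst c \<and> snd d < snd c}"
proof -
  let ?D = "skew_cells a b"
  have "(\<Sum>c\<in>?D. ls a b c) = card (SIGMA c:?D. {d \<in> ?D. d \<noteq> c \<and> fst d \<le> fst c \<and> snd d \<le> snd c})"
    using finite_skew_cells by (simp add: ls_def)
  also have "(SIGMA c:?D. {d \<in> ?D. d \<noteq> c \<and> fst d \<le> fst c \<and> snd d \<le> snd c})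
    = {(c, d). c \<in> ?D \<and> d \<in> ?D \<and> fst d < fst c \<and> snd d \<le> snd c}
      \<union> {(c, d). c \<in> ?D \<and> d \<in> ?D \<and> fst d = fst c \<and> snd d < snd c}"
    by (auto simp: prod_eq_iff)
  also have "card \<dots> = card {(c, d). c \<in> ?D \<and> d \<in> ?D \<and> fst d < fst c \<and> snd d \<le> snd c}
      + card {(c, d). c \<in> ?D \<and> d \<in> ?D \<and> fst d = fst c \<and> snd d < snd c}"
    by (intro card_Un_disjoint finite_pairs_skew_cells) auto
  finally show ?thesis .
qed

lemma card_skew_cells_choose_two:
  "card (skew_cells a b) choose 2
    = card {(c, d). c \<in> skew_cells a b \<and> d \<in> skew_cells a b \<and> fst d < fst c}
    + card {(c, d). c \<in> skew_cells a b \<and> d \<in> skew_cells a b \<and> fst d = fst c \<and> snd d < snd c}"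
proof -
  let ?D = "skew_cells a b"
  have "card ?D choose 2 = card {(c, d). c \<in> ?D \<and> d \<in> ?D \<and> d < c}"
    using card_pairs_less[OF finite_skew_cells, of "\<lambda>c. c"] by simp
  also have "{(c, d). c \<in> ?D \<and> d \<in> ?D \<and> d < c}
    = {(c, d). c \<in> ?D \<and> d \<in> ?D \<and> fst d < fst c}
      \<union> {(c, d). c \<in> ?D \<and> d \<in> ?D \<and> fst d = fst c \<and> snd d < snd c}"
    by (auto simp: less_prod_def')
  also have "card \<dots> = card {(c, d). c \<in> ?D \<and> d \<in> ?D \<and> fst d < fst c}
      + card {(c, d). c \<in> ?D \<and> d \<in> ?D \<and> fst d = fst c \<and> snd d < snd c}"
    by (intro card_Un_disjoint finite_pairs_skew_cells) auto
  finally show ?thesis .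
qed

lemma SET_eq_interval:
  assumes "is_partition b"
  shows "SET a b = {T. tab_le a b (S_col a b) T \<and> tab_le a b T (S_row a b)}"
proof (intro set_eqI iffI)
  fix T assume T: "T \<in> SET a b"
  then have "T \<in> SIT a b" by (simp add: SET_iff)
  then show "T \<in> {T. tab_le a b (S_col a b) T \<and> tab_le a b T (S_row a b)}"
    using S_col_le_SET[OF assms T] SIT_le_S_row by simp
next
  fix T assume "T \<in> {T. tab_le a b (S_col a b) T \<and> tab_le a b T (S_row a b)}"
  then show "T \<in> SET a b" using tab_le_SET[OF _ S_col_SET] by simp
qed

lemma minimal_SET_eq_S_col:
  assumes "is_partition b"
  shows "{T \<in> SET a b. \<not> (\<exists>T'\<in>SET a b. T' \<noteq> T \<and> tab_le a b T' T)} = {S_col a b}"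
proof -
  have "T' = S_col a b" if "T' \<in> SET a b" and "tab_le a b T' (S_col a b)" for T'
    using tab_le_antisym[OF that(2) S_col_le_SET[OF assms that(1)]] .
  moreover have "T = S_col a b"
    if "T \<in> SET a b" and "\<not> (\<exists>T'\<in>SET a b. T' \<noteq> T \<and> tab_le a b T' T)" for T
    using that(2) S_col_SET[of a b] S_col_le_SET[OF assms that(1)] by auto
  ultimately show ?thesis using S_col_SET by auto
qed

lemma inv_count_S_row_minus_S_col:
  "int (inv_count a b (S_row a b)) - int (inv_count a b (S_col a b))
    = int (card (skew_cells a b) choose 2) - int (\<Sum>c\<in>skew_cells a b. ls a b c)"
  unfolding inv_count_S_row inv_count_S_col sum_ls card_skew_cells_choose_two by simp

theorem corollary4p3:
  fixes a b :: "nat list"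
  assumes "is_composition a" and "is_composition b"
    and "comp_contained b a" and "reduced a b" and "is_partition b"
  shows "S_col a b \<in> SET a b
    \<and> {T \<in> SET a b. \<not> (\<exists>T'\<in>SET a b. T' \<noteq> T \<and> tab_le a b T' T)} = {S_col a b}
    \<and> SET a b = {T. tab_le a b (S_col a b) T \<and> tab_le a b T (S_row a b)}
    \<and> int (inv_count a b (S_row a b)) - int (inv_count a b (S_col a b))
        = int (card (skew_cells a b) choose 2) - int (\<Sum>c\<in>skew_cells a b. ls a b c)"
  by (intro conjI S_col_SET minimal_SET_eq_S_col SET_eq_interval inv_count_S_row_minus_S_col assms(5))

end
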